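(* Let $\mathcal{H}$ be a finite set of hypotheses and $\mathcal{R}$ a finite collection of decision regions $r\subseteq\mathcal{H}$. Let $k_{\mathrm{iff}}$ be the largest cardinality of a set $R\subseteq\mathcal{R}$ such that for every $r\in R$ there is a hypothesis $h$ with $h\notin r$ and $h\in r'$ for all $r'\in R\setminus\{r\}$. Let $k_{\mathrm{as}}=m+1$, where $m$ is the largest cardinality of a set $R\subseteq\mathcal{R}$ such that (1) some hypothesis $\tilde h$ lies in every region of $R$, and (2) for every $r\in R$ there is a hypothesis $h$ with $h\notin r$ and $h\in r'$ for all $r'\in R\setminus\{r\}$. Then $k_{\mathrm{as}}\ge k_{\mathrm{iff}}$. *)

theory Defs
  imports Main
begin

definition separating :: "'h set \<Rightarrow> 'h set set \<Rightarrow> bool" where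
  "separating H R \<longleftrightarrow> (\<forall>r\<in>R. \<exists>h\<in>H. h \<notin> r \<and> (\<forall>r'\<in>R - {r}. h \<in> r'))"

definition k_iff :: "'h set \<Rightarrow> 'h set set \<Rightarrow> nat" where
  "k_iff H Rs = Max {card R | R. R \<subseteq> Rs \<and> separating H R}"

definition k_as :: "'h set \<Rightarrow> 'h set set \<Rightarrow> nat" where
  "k_as H Rs = Max {card R | R. R \<subseteq> Rs \<and> (\<exists>ht\<in>H. \<forall>r\<in>R. ht \<in> r) \<and> separating H R} + 1"

end

theory Submission
  imports Defs
begin

text \<open>Take a separating family \<open>R\<close> of maximal size \<open>k_iff\<close> and drop one region \<open>r\<close>.
  The rest is still separating, and the witness of \<open>r\<close> lies in every remaining region,
  so it is a common hypothesis; hence \<open>k_iff - 1 < k_as\<close>.\<close>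

lemma separating_subset:
  assumes "separating H R" and "R' \<subseteq> R"
  shows "separating H R'"
  unfolding separating_def
proof
  fix r assume "r \<in> R'"
  then obtain h where "h \<in> H" "h \<notin> r" "\<forall>r'\<in>R - {r}. h \<in> r'"
    using assms unfolding separating_def by blast
  then show "\<exists>h\<in>H. h \<notin> r \<and> (\<forall>r'\<in>R' - {r}. h \<in> r')"
    using assms(2) by blast
qed

lemma separating_Diff_singleton_common_point:
  assumes "separating H R" and "r \<in> R"
  shows "\<exists>h\<in>H. \<forall>r'\<in>R - {r}. h \<in> r'"
  using assms unfolding separating_def by blast

lemma finite_card_subfamilies:
  assumes "finite Rs"
  shows "finite {card R | R. R \<subseteq> Rs \<and> P R}"
proof (rule finite_subset)
  show "{card R | R. R \<subseteq> Rs \<and> P R} \<subseteq> card ` Pow Rs"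
    by blast
  show "finite (card ` Pow Rs)"
    using assms by simp
qed

lemma k_iff_attained:
  assumes "finite Rs"
  obtains R where "R \<subseteq> Rs" and "separating H R" and "k_iff H Rs = card R"
proof -
  let ?A = "{card R | R. R \<subseteq> Rs \<and> separating H R}"
  have "0 \<in> ?A"
    by (force simp: separating_def)
  then have "Max ?A \<in> ?A"
    using Max_in[OF finite_card_subfamilies[OF assms]] by blast
  then show thesis
    using that unfolding k_iff_def by blast
qed

lemma card_less_k_as:
  assumes "finite Rs" and "R \<subseteq> Rs" and "\<exists>ht\<in>H. \<forall>r\<in>R. ht \<in> r" and "separating H R"
  shows "card R < k_as H Rs"
proof -
  have "card R \<le> Max {card R | R. R \<subseteq> Rs \<and> (\<exists>ht\<in>H. \<forall>r\<in>R. ht \<in> r) \<and> separating H R}"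
    using assms by (intro Max_ge finite_card_subfamilies) blast+
  then show ?thesis
    unfolding k_as_def by linarith
qed

theorem proposition2:
  fixes H :: "'h set" and Rs :: "'h set set"
  assumes "finite H" and "H \<noteq> {}" and "finite Rs" and "\<forall>r\<in>Rs. r \<subseteq> H"
  shows "k_as H Rs \<ge> k_iff H Rs"
proof -
  obtain R where R: "R \<subseteq> Rs" "separating H R" "k_iff H Rs = card R"
    using k_iff_attained[OF assms(3)] .
  show ?thesis
  proof (cases "R = {}")
    case True
    then show ?thesis
      using R(3) by (simp add: k_as_def)
  next
    case False
    then obtain r where r: "r \<in> R"
      by blast
    have "finite R"
      using R(1) assms(3) finite_subset by blast
    have "card (R - {r}) < k_as H Rs"
    proof (rule card_less_k_as[OF assms(3)])
      show "R - {r} \<subseteq> Rs"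
        using R(1) by blast
      show "\<exists>ht\<in>H. \<forall>r'\<in>R - {r}. ht \<in> r'"
        using separating_Diff_singleton_common_point[OF R(2) r] .
      show "separating H (R - {r})"
        using separating_subset[OF R(2)] by blast
    qed
    moreover have "card R = card (R - {r}) + 1"
      using card_Suc_Diff1[OF \<open>finite R\<close> r] by simp
    ultimately show ?thesis
      using R(3) by linarith
  qed
qed

end
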